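(* Let $Z:\Sigma\to\widetilde{\Lambda^C(Y)}$ be a section of $\sigma^C$, given in the local coordinates described in the context by $(t_1,t_2)\mapsto (t_1,t_2,q^a_1,q^a_2,P^a_1,P^a_2)$, and let $h$ be a complex-regularized Hamiltonian section given locally by $p=-H(t_1,t_2,q^a_1,q^a_2,P^a_1,P^a_2)$. Then $Z$ is a solution of $h$ (on this coordinate chart) if and only if, for all $a=1,\dots,n$, \begin{align*} \frac{\partial H}{\partial q^a_1} &= -\partial_1 P^a_1 + \partial_2 P^a_2, & \frac{\partial H}{\partial q^a_2} &= -\partial_1 P^a_2 - \partial_2 P^a_1,\\ \frac{\partial H}{\partial P^a_1} &= \partial_1 q^a_1 + \partial_2 q^a_2, & \frac{\partial H}{\partial P^a_2} &= \partial_1 q^a_2 - \partial_2 q^a_1, \end{align*} where $\partial_k=\partial/\partial t_k$ and the left-hand sides are evaluated at $Z(t)$.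
   Context: Let $(\Sigma,j)$ be a Riemann surface and $\pi:(Y,i)\to(\Sigma,j)$ a holomorphic fiber bundle (i.e. $(Y,i)$ is a complex manifold, $d\pi\circ i=j\circ d\pi$, and $Y$ is locally biholomorphic to a product). The extended multimomentum bundle is $\Lambda^2_2(Y)=\{\lambda\in\Lambda^2T^*Y:\ \lambda(u,v)=0\text{ for all }u,v\in\ker d\pi\}$ with projection $\kappa:\Lambda^2_2(Y)\to Y$, and $\Lambda^C(Y)=\{\lambda\in\Lambda^2_2(Y):\lambda(i\cdot,i\cdot)=\lambda\}$. The tautological 2-form $\Theta$ on $\Lambda^C(Y)$ is $\Theta_\lambda(X_1,X_2)=\lambda(d\kappa X_1,d\kappa X_2)$, and $\Omega=d\Theta$. One has $\pi^*\Lambda^2(\Sigma)\subseteq\Lambda^C(Y)$; set $\widetilde{\Lambda^C(Y)}=\Lambda^C(Y)/\pi^*\Lambda^2(\Sigma)$ (fiberwise quotient over $Y$), with quotient map $\mu^C:\Lambda^C(Y)\to\widetilde{\Lambda^C(Y)}$ and projection $\sigma^C:\widetilde{\Lambda^C(Y)}\to\Sigma$. A complex-regularized Hamiltonian section is a smooth section $h$ of $\mu^C$; put $\Theta^h=h^*\Theta$, $\Omega^h=h^*\Omega$. A section $Z$ of $\sigma^C$ is a solution of $h$ if $Z^*(X\lrcorner\Omega^h)=0$ for all vector fields $X$ on $\widetilde{\Lambda^C(Y)}$. Local coordinates: choose local coordinates $(t_1,t_2)$ on $\Sigma$ and $(t_1,t_2,q^a_1,q^a_2)_{a=1}^n$ on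 $Y$ with $j\partial_{t_1}=\partial_{t_2}$ and $i\,\partial_{q^a_1}=\partial_{q^a_2}$. Every element of $\Lambda^C(Y)$ over such a chart is uniquely of the form $\lambda=p\,dt_1\wedge dt_2+\sum_a(P^a_1dq^a_1+P^a_2dq^a_2)\wedge dt_2-\sum_a(P^a_1dq^a_2-P^a_2dq^a_1)\wedge dt_1$, giving coordinates $(t_1,t_2,q^a_1,q^a_2,P^a_1,P^a_2,p)$ on $\Lambda^C(Y)$ and $(t_1,t_2,q^a_1,q^a_2,P^a_1,P^a_2)$ on $\widetilde{\Lambda^C(Y)}$. A Hamiltonian section is then locally of the form $p=-H(t,q,P)$ for a smooth local function $H$. *)

theory Defs
  imports "HOL-Analysis.Analysis"
begin

text \<open>The index a ranges over the finite type 'n (so n = CARD('n)).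
  Points of Y over the chart: ((t1,t2),(q1,q2)).
  Points of the reduced bundle (tilde Lambda^C): (((t1,t2),(q1,q2)),(P1,P2)).
  Points of Lambda^C: ((((t1,t2),(q1,q2)),(P1,P2)), p).
  Tangent vectors are elements of the same vector spaces (coordinate chart).\<close>

type_synonym 'n ypt = "(real \<times> real) \<times> ((real^'n) \<times> (real^'n))"
type_synonym 'n rpt = "'n ypt \<times> ((real^'n) \<times> (real^'n))"
type_synonym 'n cpt = "'n rpt \<times> real"

definition dt1 :: "'n::finite ypt \<Rightarrow> real" where "dt1 u = fst (fst u)"
definition dt2 :: "'n::finite ypt \<Rightarrow> real" where "dt2 u = snd (fst u)"
definition dq1 :: "'n::finite \<Rightarrow> 'n ypt \<Rightarrow> real" where "dq1 a u = fst (snd u) $ a"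
definition dq2 :: "'n::finite \<Rightarrow> 'n ypt \<Rightarrow> real" where "dq2 a u = snd (snd u) $ a"

definition wedge :: "('v \<Rightarrow> real) \<Rightarrow> ('v \<Rightarrow> real) \<Rightarrow> 'v \<Rightarrow> 'v \<Rightarrow> real" where
  "wedge \<alpha> \<beta> u v = \<alpha> u * \<beta> v - \<alpha> v * \<beta> u"

text \<open>The element of Lambda^C(Y) with coordinates (P1,P2,p), as a bilinear form on T Y.\<close>
definition lamC :: "real \<Rightarrow> real^'n::finite \<Rightarrow> real^'n \<Rightarrow> 'n ypt \<Rightarrow> 'n ypt \<Rightarrow> real" where
  "lamC p P1 P2 u v =
     p * wedge dt1 dt2 u v
     + (\<Sum>a\<in>UNIV. wedge (\<lambda>w. P1 $ a * dq1 a w + P2 $ a * dq2 a w) dt2 u v)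
     - (\<Sum>a\<in>UNIV. wedge (\<lambda>w. P1 $ a * dq2 a w - P2 $ a * dq1 a w) dt1 u v)"

text \<open>Projection kappa : Lambda^C(Y) \<rightarrow> Y (linear in coordinates, so d kappa = kappa).\<close>
definition kappa :: "'n::finite cpt \<Rightarrow> 'n ypt" where "kappa x = fst (fst x)"

definition Theta :: "'n::finite cpt \<Rightarrow> 'n cpt \<Rightarrow> 'n cpt \<Rightarrow> real" where
  "Theta x X1 X2 = lamC (snd x) (fst (snd (fst x))) (snd (snd (fst x))) (kappa X1) (kappa X2)"

text \<open>Exterior derivative of a 2-form on a vector space (evaluated on constant vectors).\<close>
definition ext_d2 :: "('a::real_normed_vector \<Rightarrow> 'a \<Rightarrow> 'a \<Rightarrow> real) \<Rightarrow> 'a \<Rightarrow> 'a \<Rightarrow> 'a \<Rightarrow> 'a \<Rightarrow> real" where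
  "ext_d2 \<theta> x u v w =
     frechet_derivative (\<lambda>y. \<theta> y v w) (at x) u
     - frechet_derivative (\<lambda>y. \<theta> y u w) (at x) v
     + frechet_derivative (\<lambda>y. \<theta> y u v) (at x) w"

definition Omega :: "'n::finite cpt \<Rightarrow> 'n cpt \<Rightarrow> 'n cpt \<Rightarrow> 'n cpt \<Rightarrow> real" where
  "Omega = ext_d2 Theta"

definition pull3 :: "('a::real_normed_vector \<Rightarrow> 'b::real_normed_vector) \<Rightarrow> ('b \<Rightarrow> 'b \<Rightarrow> 'b \<Rightarrow> 'b \<Rightarrow> real)
    \<Rightarrow> 'a \<Rightarrow> 'a \<Rightarrow> 'a \<Rightarrow> 'a \<Rightarrow> real" where
  "pull3 f \<omega> x u v w = \<omega> (f x) (frechet_derivative f (at x) u)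
      (frechet_derivative f (at x) v) (frechet_derivative f (at x) w)"

definition pull2 :: "('a::real_normed_vector \<Rightarrow> 'b::real_normed_vector) \<Rightarrow> ('b \<Rightarrow> 'b \<Rightarrow> 'b \<Rightarrow> real)
    \<Rightarrow> 'a \<Rightarrow> 'a \<Rightarrow> 'a \<Rightarrow> real" where
  "pull2 f \<omega> x u v = \<omega> (f x) (frechet_derivative f (at x) u) (frechet_derivative f (at x) v)"

definition contract :: "('b \<Rightarrow> 'b) \<Rightarrow> ('b \<Rightarrow> 'b \<Rightarrow> 'b \<Rightarrow> 'b \<Rightarrow> real) \<Rightarrow> 'b \<Rightarrow> 'b \<Rightarrow> 'b \<Rightarrow> real" where
  "contract X \<omega> x u v = \<omega> x (X x) u v"

definition hsec :: "('n::finite rpt \<Rightarrow> real) \<Rightarrow> 'n rpt \<Rightarrow> 'n cpt" where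
  "hsec H x = (x, - H x)"

definition OmegaH :: "('n::finite rpt \<Rightarrow> real) \<Rightarrow> 'n rpt \<Rightarrow> 'n rpt \<Rightarrow> 'n rpt \<Rightarrow> 'n rpt \<Rightarrow> real" where
  "OmegaH H = pull3 (hsec H) Omega"

definition Zsec :: "(real \<times> real \<Rightarrow> real^'n::finite) \<Rightarrow> (real \<times> real \<Rightarrow> real^'n) \<Rightarrow> (real \<times> real \<Rightarrow> real^'n)
    \<Rightarrow> (real \<times> real \<Rightarrow> real^'n) \<Rightarrow> real \<times> real \<Rightarrow> 'n rpt" where
  "Zsec q1 q2 P1 P2 t = ((t, (q1 t, q2 t)), (P1 t, P2 t))"

definition is_solution_on :: "(real \<times> real) set \<Rightarrow> ('n::finite rpt \<Rightarrow> real) \<Rightarrow> (real \<times> real \<Rightarrow> 'n rpt) \<Rightarrow> bool" where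
  "is_solution_on U H Z \<longleftrightarrow>
     (\<forall>X :: 'n rpt \<Rightarrow> 'n rpt. \<forall>t\<in>U. \<forall>w1 w2. pull2 Z (contract X (OmegaH H)) t w1 w2 = 0)"


end

theory Submission
  imports Defs
begin

text \<open>The tautological form \<open>\<Theta>\<close> is linear in the base point, so in these coordinates
  \<open>\<Omega> = d\<Theta>\<close> has constant coefficients, and \<open>h\<^sup>*\<Omega>\<close> at a point only sees the derivative
  \<open>L = DH\<close> through the lift \<open>u \<mapsto> (u, - L u)\<close>. Being alternating, the pullback along \<open>Z\<close>
  of \<open>X \<lrcorner> \<Omega>\<^sup>h\<close> vanishes iff it vanishes on the pair \<open>A = \<partial>\<^sub>1Z, B = \<partial>\<^sub>2Z\<close>. The 1-form
  \<open>V \<mapsto> \<Omega>\<^sup>h(V, A, B)\<close> kills \<open>A\<close> and \<open>B\<close>, and \<open>A\<close>, \<open>B\<close> together with the vertical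
  coordinate vectors span the tangent space; its values on the vertical vectors are exactly
  the differences of the two sides of the four Hamilton equations.\<close>

lemma bilinear_alternating_on_plane:
  fixes \<beta> :: "'a::real_vector \<Rightarrow> 'a \<Rightarrow> real" and D :: "real \<times> real \<Rightarrow> 'a"
  assumes D: "linear D"
    and lin1: "\<And>v. linear (\<lambda>u. \<beta> u v)" and lin2: "\<And>u. linear (\<beta> u)"
    and alt: "\<And>u. \<beta> u u = 0"
  shows "\<beta> (D w) (D w') = (fst w * snd w' - snd w * fst w') * \<beta> (D (1, 0)) (D (0, 1))"
proof -
  define A B where "A = D (1, 0)" and "B = D (0, 1)"
  have D_eq: "D z = fst z *\<^sub>R A + snd z *\<^sub>R B" for z
  proof -
    have "z = fst z *\<^sub>R (1, 0) + snd z *\<^sub>R (0, 1)" by (simp add: prod_eq_iff)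
    then have "D z = D (fst z *\<^sub>R (1, 0) + snd z *\<^sub>R (0, 1))" by simp
    then show ?thesis
      unfolding A_def B_def by (simp only: linear_add[OF D] linear_scale[OF D])
  qed
  have expand: "\<beta> (a *\<^sub>R A + b *\<^sub>R B) (c *\<^sub>R A + d *\<^sub>R B)
      = a * c * \<beta> A A + a * d * \<beta> A B + b * c * \<beta> B A + b * d * \<beta> B B" for a b c d
    by (simp add: linear_add[OF lin1] linear_scale[OF lin1] linear_add[OF lin2] linear_scale[OF lin2]
        algebra_simps)
  have "\<beta> B A = - \<beta> A B"
    using expand[of 1 1 1 1] alt[of "A + B"] alt[of A] alt[of B] by simp
  then show ?thesis
    unfolding D_eq expand A_def[symmetric] B_def[symmetric] using alt[of A] alt[of B]
    by (simp add: algebra_simps)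
qed

lemma Theta_linear:
  "linear (\<lambda>u. Theta u v w)" "linear (\<lambda>v. Theta u v w)" "linear (\<lambda>w. Theta u v w)"
  unfolding linear_iff
  by (simp_all add: Theta_def lamC_def wedge_def kappa_def dt1_def dt2_def dq1_def dq2_def
      algebra_simps sum.distrib sum_distrib_left sum_subtractf)

lemma Theta_swap: "Theta u w v = - Theta u v w"
  by (simp add: Theta_def lamC_def wedge_def algebra_simps sum_negf[symmetric] sum_subtractf)

lemma frechet_derivative_Theta: "frechet_derivative (\<lambda>y. Theta y v w) (at x) = (\<lambda>u. Theta u v w)"
  using Theta_linear(1) linear_conv_bounded_linear bounded_linear_imp_has_derivative
  by (metis frechet_derivative_at)

definition Omega_const :: "'n::finite cpt \<Rightarrow> 'n cpt \<Rightarrow> 'n cpt \<Rightarrow> real" where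
  "Omega_const u v w = Theta u v w - Theta v u w + Theta w u v"

lemma Omega_eq_Omega_const: "Omega x = Omega_const"
  by (simp add: fun_eq_iff Omega_def ext_d2_def frechet_derivative_Theta Omega_const_def)

lemma Omega_const_linear:
  "linear (\<lambda>u. Omega_const u v w)" "linear (\<lambda>v. Omega_const u v w)"
  "linear (\<lambda>w. Omega_const u v w)"
  unfolding Omega_const_def by (intro linear_compose_add linear_compose_sub Theta_linear)+

lemma Omega_const_alternating:
  "Omega_const u u w = 0" "Omega_const u v v = 0" "Omega_const u v u = 0"
  using Theta_swap[of w u u] Theta_swap[of u v v] Theta_swap[of u v u] Theta_swap[of v u u]
  by (simp_all add: Omega_const_def)

text \<open>\<open>Omega_graph L\<close> is \<open>h\<^sup>*\<Omega>\<close> at a point where \<open>DH = L\<close>.\<close>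

definition Omega_graph :: "('n::finite rpt \<Rightarrow> real) \<Rightarrow> 'n rpt \<Rightarrow> 'n rpt \<Rightarrow> 'n rpt \<Rightarrow> real" where
  "Omega_graph L u v w = Omega_const (u, - L u) (v, - L v) (w, - L w)"

lemma linear_graph: "linear L \<Longrightarrow> linear (\<lambda>u. (u, - L u))"
  unfolding linear_iff by (simp add: algebra_simps)

lemma Omega_graph_linear:
  assumes "linear L"
  shows "linear (\<lambda>u. Omega_graph L u v w)" "linear (\<lambda>v. Omega_graph L u v w)"
    "linear (\<lambda>w. Omega_graph L u v w)"
  using linear_compose[OF linear_graph[OF assms] Omega_const_linear(1)]
    linear_compose[OF linear_graph[OF assms] Omega_const_linear(2)]
    linear_compose[OF linear_graph[OF assms] Omega_const_linear(3)]
  by (simp_all add: Omega_graph_def o_def)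

lemma Omega_graph_alternating:
  "Omega_graph L u u w = 0" "Omega_graph L u v v = 0" "Omega_graph L u v u = 0"
  by (simp_all add: Omega_graph_def Omega_const_alternating)

lemma has_derivative_hsec:
  "(H has_derivative L) (at x) \<Longrightarrow> (hsec H has_derivative (\<lambda>u. (u, - L u))) (at x)"
  unfolding hsec_def by (auto intro!: derivative_eq_intros)

lemma pull2_contract_OmegaH:
  assumes "(Z has_derivative DZ) (at t)" and "(H has_derivative L) (at (Z t))"
  shows "pull2 Z (contract X (OmegaH H)) t w1 w2 = Omega_graph L (X (Z t)) (DZ w1) (DZ w2)"
  unfolding pull2_def contract_def OmegaH_def pull3_def Omega_eq_Omega_const
    frechet_derivative_at[OF assms(1), symmetric]
    frechet_derivative_at[OF has_derivative_hsec[OF assms(2)], symmetric]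
  by (simp add: Omega_graph_def)

definition e_q1 :: "'n::finite \<Rightarrow> 'n rpt" where "e_q1 a = (((0, 0), (axis a 1, 0)), (0, 0))"
definition e_q2 :: "'n::finite \<Rightarrow> 'n rpt" where "e_q2 a = (((0, 0), (0, axis a 1)), (0, 0))"
definition e_P1 :: "'n::finite \<Rightarrow> 'n rpt" where "e_P1 a = (((0, 0), (0, 0)), (axis a 1, 0))"
definition e_P2 :: "'n::finite \<Rightarrow> 'n rpt" where "e_P2 a = (((0, 0), (0, 0)), (0, axis a 1))"

lemma sum_mult_axis: "(\<Sum>b\<in>UNIV. f b * axis a (1::real) $ b) = f a"
  by (simp add: axis_def if_distrib[where f="\<lambda>x. _ * x"] cong: if_cong)

lemma sum_axis_mult: "(\<Sum>b\<in>UNIV. axis a (1::real) $ b * f b) = f a"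
  by (simp add: axis_def if_distrib[where f="\<lambda>x. x * _"] cong: if_cong)

lemma vertical_decomposition:
  "(((0, 0), (u1, u2)), (u3, u4)) =
     (\<Sum>a\<in>UNIV. u1 $ a *\<^sub>R e_q1 a + u2 $ a *\<^sub>R e_q2 a + u3 $ a *\<^sub>R e_P1 a + u4 $ a *\<^sub>R e_P2 a)"
  by (simp add: prod_eq_iff fst_sum snd_sum sum.distrib e_q1_def e_q2_def e_P1_def e_P2_def
      vec_eq_iff axis_def if_distrib[where f="\<lambda>x. _ * x"] cong: if_cong)

lemma Omega_graph_basis:
  fixes L :: "'n::finite rpt \<Rightarrow> real" and a1 a2 b1 b2 c1 c2 d1 d2 :: "real^'n"
  defines "A \<equiv> (((1, 0), (a1, a2)), (b1, b2))" and "B \<equiv> (((0, 1), (c1, c2)), (d1, d2))"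
  shows "Omega_graph L (e_q1 a) A B = - L (e_q1 a) - b1 $ a + d2 $ a"
    and "Omega_graph L (e_q2 a) A B = - L (e_q2 a) - b2 $ a - d1 $ a"
    and "Omega_graph L (e_P1 a) A B = - L (e_P1 a) + a1 $ a + c2 $ a"
    and "Omega_graph L (e_P2 a) A B = - L (e_P2 a) + a2 $ a - c1 $ a"
  unfolding A_def B_def Omega_graph_def Omega_const_def Theta_def lamC_def wedge_def kappa_def
    dt1_def dt2_def dq1_def dq2_def e_q1_def e_q2_def e_P1_def e_P2_def
  by (simp_all add: algebra_simps sum_negf sum_mult_axis sum_axis_mult)

lemma linear_eq_0_on_frame:
  fixes f :: "'n::finite rpt \<Rightarrow> 'b::real_vector" and a1 a2 b1 b2 c1 c2 d1 d2 :: "real^'n"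
  defines "A \<equiv> (((1, 0), (a1, a2)), (b1, b2))" and "B \<equiv> (((0, 1), (c1, c2)), (d1, d2))"
  assumes f: "linear f" and "f A = 0" and "f B = 0"
    and vertical: "\<And>a. f (e_q1 a) = 0 \<and> f (e_q2 a) = 0 \<and> f (e_P1 a) = 0 \<and> f (e_P2 a) = 0"
  shows "f V = 0"
proof -
  obtain s1 s2 r1 r2 R1 R2 where V: "V = (((s1, s2), (r1, r2)), (R1, R2))"
    by (metis prod.collapse)
  define V0 where "V0 = (((0::real, 0::real), (r1 - s1 *\<^sub>R a1 - s2 *\<^sub>R c1, r2 - s1 *\<^sub>R a2 - s2 *\<^sub>R c2)),
    (R1 - s1 *\<^sub>R b1 - s2 *\<^sub>R d1, R2 - s1 *\<^sub>R b2 - s2 *\<^sub>R d2))"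
  have "V = V0 + s1 *\<^sub>R A + s2 *\<^sub>R B"
    by (simp add: V V0_def A_def B_def)
  then have "f V = f V0"
    using \<open>f A = 0\<close> \<open>f B = 0\<close> by (simp add: linear_add[OF f] linear_scale[OF f])
  also have "f V0 = 0"
    unfolding V0_def vertical_decomposition
    by (simp add: linear_sum[OF f] linear_add[OF f] linear_scale[OF f] vertical)
  finally show ?thesis .
qed

lemma Omega_graph_vanishes_iff:
  fixes L :: "'n::finite rpt \<Rightarrow> real" and a1 a2 b1 b2 c1 c2 d1 d2 :: "real^'n"
  defines "A \<equiv> (((1, 0), (a1, a2)), (b1, b2))" and "B \<equiv> (((0, 1), (c1, c2)), (d1, d2))"
  assumes "linear L"
  shows "(\<forall>V. Omega_graph L V A B = 0) \<longleftrightarrow>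
    (\<forall>a. L (e_q1 a) = - b1 $ a + d2 $ a \<and> L (e_q2 a) = - b2 $ a - d1 $ a
       \<and> L (e_P1 a) = a1 $ a + c2 $ a \<and> L (e_P2 a) = a2 $ a - c1 $ a)"
    (is "_ \<longleftrightarrow> (\<forall>a. ?hamilton a)")
proof
  assume vanish: "\<forall>V. Omega_graph L V A B = 0"
  show "\<forall>a. ?hamilton a"
  proof
    fix a
    show "?hamilton a"
      using vanish[rule_format, of "e_q1 a"] vanish[rule_format, of "e_q2 a"]
        vanish[rule_format, of "e_P1 a"] vanish[rule_format, of "e_P2 a"]
      unfolding A_def B_def Omega_graph_basis by linarith
  qed
next
  assume hamilton: "\<forall>a. ?hamilton a"
  show "\<forall>V. Omega_graph L V A B = 0"
  proof
    fix V
    show "Omega_graph L V A B = 0"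
      unfolding A_def B_def
      by (rule linear_eq_0_on_frame[of "\<lambda>V. Omega_graph L V _ _" a1 a2 b1 b2 c1 c2 d1 d2])
        (simp_all add: Omega_graph_linear \<open>linear L\<close> Omega_graph_alternating
          Omega_graph_basis hamilton)
  qed
qed

lemma is_solution_on_iff_Omega_graph:
  assumes Z: "\<And>t. t \<in> U \<Longrightarrow> (Z has_derivative DZ t) (at t)"
    and H: "\<And>t. t \<in> U \<Longrightarrow> (H has_derivative L t) (at (Z t))"
  shows "is_solution_on U H Z \<longleftrightarrow>
    (\<forall>t\<in>U. \<forall>V. Omega_graph (L t) V (DZ t (1, 0)) (DZ t (0, 1)) = 0)"
proof -
  have plane: "Omega_graph (L t) V (DZ t w1) (DZ t w2) =
      (fst w1 * snd w2 - snd w1 * fst w2) * Omega_graph (L t) V (DZ t (1, 0)) (DZ t (0, 1))"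
    if "t \<in> U" for t V w1 w2
    using has_derivative_linear[OF Z[OF that]] has_derivative_linear[OF H[OF that]]
    by (intro bilinear_alternating_on_plane Omega_graph_linear Omega_graph_alternating)
  have "is_solution_on U H Z \<longleftrightarrow>
      (\<forall>X. \<forall>t\<in>U. \<forall>w1 w2. Omega_graph (L t) (X (Z t)) (DZ t w1) (DZ t w2) = 0)"
    unfolding is_solution_on_def by (simp add: pull2_contract_OmegaH[OF Z H])
  also have "\<dots> \<longleftrightarrow> (\<forall>t\<in>U. \<forall>V. Omega_graph (L t) V (DZ t (1, 0)) (DZ t (0, 1)) = 0)"
    (is "?pulled \<longleftrightarrow> ?on_frame")
  proof
    assume ?pulled
    show ?on_frame
    proof (intro ballI allI)
      fix t V
      assume "t \<in> U"
      then show "Omega_graph (L t) V (DZ t (1, 0)) (DZ t (0, 1)) = 0"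
        using spec[OF \<open>?pulled\<close>, of "\<lambda>_. V"] by simp
    qed
  next
    assume ?on_frame
    show ?pulled
    proof (intro allI ballI)
      fix X t w1 w2
      assume "t \<in> U"
      with \<open>?on_frame\<close> have "Omega_graph (L t) (X (Z t)) (DZ t (1, 0)) (DZ t (0, 1)) = 0"
        by blast
      then show "Omega_graph (L t) (X (Z t)) (DZ t w1) (DZ t w2) = 0"
        by (simp add: plane[OF \<open>t \<in> U\<close>, of "X (Z t)" w1 w2])
    qed
  qed
  finally show ?thesis .
qed

lemma has_derivative_Zsec:
  assumes "q1 differentiable (at t)" "q2 differentiable (at t)"
    "P1 differentiable (at t)" "P2 differentiable (at t)"
  shows "(Zsec q1 q2 P1 P2 has_derivative
      (\<lambda>w. ((w, (frechet_derivative q1 (at t) w, frechet_derivative q2 (at t) w)),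
        (frechet_derivative P1 (at t) w, frechet_derivative P2 (at t) w)))) (at t)"
  using assms unfolding Zsec_def frechet_derivative_works
  by (intro has_derivative_Pair has_derivative_ident)

theorem mainTheorem1:
  fixes U :: "(real \<times> real) set" and W :: "'n::finite rpt set"
    and H :: "'n rpt \<Rightarrow> real"
    and q1 q2 P1 P2 :: "real \<times> real \<Rightarrow> real^'n"
  assumes "open U" and "open W"
    and "Zsec q1 q2 P1 P2 ` U \<subseteq> W"
    and "\<forall>x\<in>W. H differentiable (at x)"
    and "\<forall>t\<in>U. q1 differentiable (at t) \<and> q2 differentiable (at t)
                 \<and> P1 differentiable (at t) \<and> P2 differentiable (at t)"
  shows "is_solution_on U H (Zsec q1 q2 P1 P2) \<longleftrightarrow>
    (\<forall>t\<in>U. \<forall>a::'n.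
       let x = Zsec q1 q2 P1 P2 t;
           DH = frechet_derivative H (at x);
           d1 = (\<lambda>f. frechet_derivative f (at t) (1, 0) $ a);
           d2 = (\<lambda>f. frechet_derivative f (at t) (0, 1) $ a)
       in DH (((0, 0), (axis a 1, 0)), (0, 0)) = - d1 P1 + d2 P2
        \<and> DH (((0, 0), (0, axis a 1)), (0, 0)) = - d1 P2 - d2 P1
        \<and> DH (((0, 0), (0, 0)), (axis a 1, 0)) = d1 q1 + d2 q2
        \<and> DH (((0, 0), (0, 0)), (0, axis a 1)) = d1 q2 - d2 q1)"
proof -
  let ?Z = "Zsec q1 q2 P1 P2"
  have Z: "(?Z has_derivative (\<lambda>w. ((w, (frechet_derivative q1 (at t) w, frechet_derivative q2 (at t) w)),
      (frechet_derivative P1 (at t) w, frechet_derivative P2 (at t) w)))) (at t)" if "t \<in> U" for t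
    using assms(5) that by (intro has_derivative_Zsec) auto
  have H: "(H has_derivative frechet_derivative H (at (?Z t))) (at (?Z t))" if "t \<in> U" for t
    using assms(3,4) that by (auto simp: frechet_derivative_works)
  show ?thesis
    by (simp only: is_solution_on_iff_Omega_graph[OF Z H]
        Omega_graph_vanishes_iff[OF has_derivative_linear[OF H]] cong: ball_cong)
      (simp add: Let_def e_q1_def e_q2_def e_P1_def e_P2_def)
qed

end
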